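(* Let $\Omega\subset\mathbb{R}^2$ be a bounded polygonal domain with an admissible mesh, let $\Delta t>0$, $\varepsilon>0$, $\rho\in(0,1]$, $0<M^D<1$, $d_1,d_2>0$, $\kappa_1,\kappa_2,\kappa_3\ge0$, $\kappa_4>0$, $a\ge1$, $b\ge0$, and let $(S^{k-1}_K)_K$, $(M^{k-1}_K)_K$ satisfy $0\le S^{k-1}_K\le1$, $0\le M^{k-1}_K<1$ for all $K\in\mathcal{T}$. Let $(S^\varepsilon,W^\varepsilon)$ be a solution of the system $$\frac{\mathrm{m}(K)}{\Delta t}(S^\varepsilon_K-\rho S^{k-1}_K)-\rho d_1\sum_{\sigma\in\mathcal{E}_K}\tau_\sigma\mathrm{D}_{K,\sigma}S^\varepsilon=\rho\,\mathrm{m}(K)g([S^\varepsilon_K]_+,M^\varepsilon_K),$$ $$\varepsilon\Big(\mathrm{m}(K)W^\varepsilon_K-\sum_{\sigma\in\mathcal{E}_K}\tau_\sigma\mathrm{D}_{K,\sigma}W^\varepsilon\Big)=-\rho\frac{\mathrm{m}(K)}{\Delta t}(M^\varepsilon_K-M^{k-1}_K)+\rho d_2\sum_{\sigma\in\mathcal{E}_K}\tau_\sigma\mathrm{D}_{K,\sigma}F(M^\varepsilon)+\rho\,\mathrm{m}(K)h([S^\varepsilon_K]_+,M^\varepsilon_K)$$ for all $K\in\mathcal{T}$, with boundary values $S^\varepsilon_\sigma=1$, $W^\varepsilon_\sigma=0$ for $\sigma\in\mathcal{E}_{\rm ext}$, where $M^\varepsilon_K\in(0,1)$ is the unique solution of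 $W^\varepsilon_K=F(M^\varepsilon_K)-F(M^D)+\varepsilon\log(M^\varepsilon_K/M^D)$. Then $0\le S^\varepsilon_K\le1$ for all $K\in\mathcal{T}$.
   Context: $f(M)=M^b/(1-M)^a$, $F(M)=\int_0^Mf(s)ds$ for $M\in[0,1)$; $g(S,M)=-\kappa_1\frac{SM}{\kappa_4+S}$, $h(S,M)=\kappa_3\frac{SM}{\kappa_4+S}-\kappa_2M$; $[z]_+=\max\{0,z\}$. Admissible mesh (Eymard–Gallouët–Herbin): open polygonal control volumes $\mathcal{T}$ partitioning $\Omega$, edges $\mathcal{E}=\mathcal{E}_{\rm int}\cup\mathcal{E}_{\rm ext}$, points $x_K$ with $\overline{x_Kx_L}$ orthogonal to each interior edge $\sigma=K|L$; $\mathcal{E}_K$ the edges of $K$. $\mathrm{d}_\sigma=\mathrm{d}(x_K,x_L)$ for $\sigma=K|L$, $\mathrm{d}_\sigma=\mathrm{d}(x_K,\sigma)$ for boundary edges; $\tau_\sigma=\mathrm{m}(\sigma)/\mathrm{d}_\sigma$ ($\mathrm{m}$ = Lebesgue measure). For a vector $v$ with cell values $v_K$ and boundary values $v_\sigma$: $v_{K,\sigma}=v_L$ if $\sigma=K|L$, $v_{K,\sigma}=v_\sigma$ if $\sigma\subset\partial\Omega$; $\mathrm{D}_{K,\sigma}v=v_{K,\sigma}-v_K$. $F(M^\varepsilon)$ has entries $F(M^\varepsilon_K)$ and boundary entries $F(M^D)$. *)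

theory Defs
  imports "HOL-Analysis.Analysis"
begin

type_synonym pt = "real^2"
type_synonym cell = "pt set"
(* an edge is represented by its two end points; the edge itself is the closed segment *)
type_synonym edge = "pt \<times> pt"

definition seg :: "edge \<Rightarrow> pt set" where
  "seg e = closed_segment (fst e) (snd e)"

definition elen :: "edge \<Rightarrow> real" where
  "elen e = dist (fst e) (snd e)"

definition mK :: "cell \<Rightarrow> real" where
  "mK K = measure lebesgue K"

definition edges_of :: "edge set \<Rightarrow> cell \<Rightarrow> edge set" where
  "edges_of E K = {\<sigma>\<in>E. seg \<sigma> \<subseteq> frontier K}"

definition is_int_edge :: "cell set \<Rightarrow> edge \<Rightarrow> bool" where
  "is_int_edge T \<sigma> \<longleftrightarrow> (\<exists>K\<in>T. \<exists>L\<in>T. K \<noteq> L \<and> seg \<sigma> = closure K \<inter> closure L)"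

definition E_int :: "cell set \<Rightarrow> edge set \<Rightarrow> edge set" where
  "E_int T E = {\<sigma>\<in>E. is_int_edge T \<sigma>}"

definition E_ext :: "pt set \<Rightarrow> edge set \<Rightarrow> edge set" where
  "E_ext \<Omega> E = {\<sigma>\<in>E. seg \<sigma> \<subseteq> frontier \<Omega>}"

definition nbr :: "cell set \<Rightarrow> edge set \<Rightarrow> cell \<Rightarrow> edge \<Rightarrow> cell" where
  "nbr T E K \<sigma> = (THE L. L \<in> T \<and> L \<noteq> K \<and> \<sigma> \<in> edges_of E L)"

(* Admissible mesh in the sense of Eymard--Gallouet--Herbin, for a bounded
   polygonal domain Omega in R^2 *)
definition admissible_mesh :: "pt set \<Rightarrow> cell set \<Rightarrow> edge set \<Rightarrow> (cell \<Rightarrow> pt) \<Rightarrow> bool" where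
  "admissible_mesh \<Omega> T E x \<longleftrightarrow>
     open \<Omega> \<and> connected \<Omega> \<and> bounded \<Omega> \<and> \<Omega> \<noteq> {} \<and>
     finite T \<and> finite E \<and>
     (\<forall>K\<in>T. open K \<and> K \<noteq> {} \<and> K \<subseteq> \<Omega>) \<and>
     (\<forall>K\<in>T. \<forall>L\<in>T. K \<noteq> L \<longrightarrow> K \<inter> L = {}) \<and>
     closure \<Omega> = \<Union>(closure ` T) \<and>
     (\<forall>\<sigma>\<in>E. fst \<sigma> \<noteq> snd \<sigma>) \<and> inj_on seg E \<and>
     E = E_int T E \<union> E_ext \<Omega> E \<and> E_int T E \<inter> E_ext \<Omega> E = {} \<and>
     frontier \<Omega> = \<Union>(seg ` E_ext \<Omega> E) \<and>
     (\<forall>K\<in>T. frontier K = \<Union>(seg ` edges_of E K)) \<and>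
     (\<forall>\<sigma>\<in>E_ext \<Omega> E. \<exists>K\<in>T. \<sigma> \<in> edges_of E K) \<and>
     (\<forall>K\<in>T. x K \<in> closure K) \<and>
     (\<forall>K\<in>T. \<forall>L\<in>T. \<forall>\<sigma>\<in>E. K \<noteq> L \<longrightarrow> seg \<sigma> = closure K \<inter> closure L \<longrightarrow>
         x K \<noteq> x L \<and> (x L - x K) \<bullet> (snd \<sigma> - fst \<sigma>) = 0) \<and>
     (\<forall>K\<in>T. \<forall>\<sigma>\<in>edges_of E K \<inter> E_ext \<Omega> E.
         x K \<notin> seg \<sigma> \<and> (\<exists>y\<in>seg \<sigma>. (x K - y) \<bullet> (snd \<sigma> - fst \<sigma>) = 0))"

definition d_edge :: "cell set \<Rightarrow> edge set \<Rightarrow> (cell \<Rightarrow> pt) \<Rightarrow> cell \<Rightarrow> edge \<Rightarrow> real" where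
  "d_edge T E x K \<sigma> =
     (if is_int_edge T \<sigma> then dist (x K) (x (nbr T E K \<sigma>)) else infdist (x K) (seg \<sigma>))"

definition tau :: "cell set \<Rightarrow> edge set \<Rightarrow> (cell \<Rightarrow> pt) \<Rightarrow> cell \<Rightarrow> edge \<Rightarrow> real" where
  "tau T E x K \<sigma> = elen \<sigma> / d_edge T E x K \<sigma>"

definition Dks :: "cell set \<Rightarrow> edge set \<Rightarrow> (cell \<Rightarrow> real) \<Rightarrow> real \<Rightarrow> cell \<Rightarrow> edge \<Rightarrow> real" where
  "Dks T E v vb K \<sigma> = (if is_int_edge T \<sigma> then v (nbr T E K \<sigma>) else vb) - v K"

definition flux :: "cell set \<Rightarrow> edge set \<Rightarrow> (cell \<Rightarrow> pt) \<Rightarrow> (cell \<Rightarrow> real) \<Rightarrow> real \<Rightarrow> cell \<Rightarrow> real" where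
  "flux T E x v vb K = (\<Sum>\<sigma>\<in>edges_of E K. tau T E x K \<sigma> * Dks T E v vb K \<sigma>)"

definition f_fun :: "real \<Rightarrow> real \<Rightarrow> real \<Rightarrow> real" where
  "f_fun a b M = M powr b / (1 - M) powr a"

definition F_fun :: "real \<Rightarrow> real \<Rightarrow> real \<Rightarrow> real" where
  "F_fun a b M = integral {0..M} (f_fun a b)"

definition g_fun :: "real \<Rightarrow> real \<Rightarrow> real \<Rightarrow> real \<Rightarrow> real" where
  "g_fun \<kappa>1 \<kappa>4 S M = - \<kappa>1 * (S * M) / (\<kappa>4 + S)"

definition h_fun :: "real \<Rightarrow> real \<Rightarrow> real \<Rightarrow> real \<Rightarrow> real \<Rightarrow> real" where
  "h_fun \<kappa>2 \<kappa>3 \<kappa>4 S M = \<kappa>3 * (S * M) / (\<kappa>4 + S) - \<kappa>2 * M"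

definition pos_part :: "real \<Rightarrow> real" where
  "pos_part z = max 0 z"

end

theory Submission
  imports Defs
begin

(*
  At a cell where S attains its minimum over the mesh, every difference D_{K,sigma} S is
  nonnegative: the neighbours are cells carrying values at least as large, and the Dirichlet
  value 1 exceeds a negative minimum.  If that minimum were negative, g([S_K]_+, M_K) = 0 and
  the equation would give S_K >= rho S^{k-1}_K >= 0.  Symmetrically, at a maximum above 1 the
  reaction term is nonpositive and S_K <= rho S^{k-1}_K <= 1.

  The geometric input is that the neighbour across an interior edge is a cell of the mesh,
  i.e. that no three cells share an edge on their boundaries: near a generic point of the
  edge the two open half-discs contain no cell boundary, so every adjacent cell contains one
  of them.
*)

lemma finite_closed_segment_Int_hyperplane:
  fixes a b n :: "'a::real_inner"
  assumes "\<not> closed_segment a b \<subseteq> {y. n \<bullet> y = c}"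
  shows "finite (closed_segment a b \<inter> {y. n \<bullet> y = c})"
proof -
  have inner_on_segment: "n \<bullet> ((1 - u) *\<^sub>R a + u *\<^sub>R b) = n \<bullet> a + u * (n \<bullet> b - n \<bullet> a)" for u
    by (simp add: inner_add_right algebra_simps)
  define u0 where "u0 = (c - n \<bullet> a) / (n \<bullet> b - n \<bullet> a)"
  have "y = (1 - u0) *\<^sub>R a + u0 *\<^sub>R b"
    if y: "y \<in> closed_segment a b" "n \<bullet> y = c" for y
  proof -
    obtain u where u: "y = (1 - u) *\<^sub>R a + u *\<^sub>R b"
      using y(1) unfolding in_segment by blast
    have "n \<bullet> b \<noteq> n \<bullet> a"
      using assms y(2) inner_on_segment by (auto simp: u in_segment)
    then have "u = u0"
      using y(2) inner_on_segment by (simp add: u u0_def eq_divide_eq algebra_simps)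
    then show ?thesis
      using u by simp
  qed
  then have "closed_segment a b \<inter> {y. n \<bullet> y = c} \<subseteq> {(1 - u0) *\<^sub>R a + u0 *\<^sub>R b}"
    by blast
  then show ?thesis
    using finite_subset by blast
qed

lemma closed_segment_generic_point:
  fixes a b n :: "'a::real_inner"
  assumes "a \<noteq> b" "finite P" "closed_segment a b \<subseteq> {y. n \<bullet> y = c}"
  obtains p r where "p \<in> closed_segment a b" "0 < r"
    "\<And>e y. e \<in> P \<Longrightarrow> y \<in> closed_segment (fst e) (snd e) \<Longrightarrow> y \<in> ball p r \<Longrightarrow> n \<bullet> y = c"
proof -
  define Q where "Q = {e\<in>P. \<not> closed_segment (fst e) (snd e) \<subseteq> {y. n \<bullet> y = c}}"
  define C where "C = (\<Union>e\<in>Q. closed_segment (fst e) (snd e))"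
  have "finite Q"
    unfolding Q_def by (rule rev_finite_subset[OF assms(2)]) auto
  then have "closed C"
    unfolding C_def by (intro closed_UN) auto
  have "closed_segment a b \<inter> C \<subseteq> (\<Union>e\<in>Q. closed_segment (fst e) (snd e) \<inter> {y. n \<bullet> y = c})"
    using assms(3) unfolding C_def by blast
  moreover have "finite \<dots>"
    using \<open>finite Q\<close> by (intro finite_UN_I) (auto simp: Q_def finite_closed_segment_Int_hyperplane)
  ultimately have "finite (closed_segment a b \<inter> C)"
    by (rule finite_subset)
  moreover have "infinite (closed_segment a b)"
    using assms(1) by simp
  ultimately obtain p where "p \<in> closed_segment a b" "p \<notin> C"
    by (metis Int_absorb2 subsetI)
  moreover obtain r where "0 < r" "ball p r \<subseteq> - C"
    using \<open>closed C\<close> \<open>p \<notin> C\<close> open_contains_ball[of "- C"] by (auto simp: closed_def)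
  moreover have "n \<bullet> y = c"
    if "e \<in> P" "y \<in> closed_segment (fst e) (snd e)" "y \<in> ball p r" for e y
  proof (rule ccontr)
    assume "n \<bullet> y \<noteq> c"
    with that(1,2) have "y \<in> C"
      unfolding C_def Q_def by blast
    with that(3) \<open>ball p r \<subseteq> - C\<close> show False
      by blast
  qed
  ultimately show thesis
    using that by blast
qed

lemma open_contains_half_ball:
  fixes L :: "'a::euclidean_space set"
  assumes "open L" "p \<in> closure L" "0 < r" "n \<noteq> 0"
    and frontier_flat: "ball p r \<inter> frontier L \<subseteq> {y. n \<bullet> y = c}"
  obtains "ball p r \<inter> {y. c < n \<bullet> y} \<subseteq> L" "ball p r \<inter> {y. c < n \<bullet> y} \<noteq> {}"
    | "ball p r \<inter> {y. n \<bullet> y < c} \<subseteq> L" "ball p r \<inter> {y. n \<bullet> y < c} \<noteq> {}"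
proof -
  have fill: "D \<subseteq> L" if "D \<subseteq> ball p r - {y. n \<bullet> y = c}" "convex D" "D \<inter> L \<noteq> {}" for D
    using connected_Int_frontier[OF convex_connected[OF \<open>convex D\<close>] \<open>D \<inter> L \<noteq> {}\<close>]
      frontier_flat that(1) by blast
  have "ball p r \<inter> L \<noteq> {}"
    using assms(1-3) open_Int_closure_eq_empty[of "ball p r" L] centre_in_ball by blast
  moreover have "interior {y. n \<bullet> y = c} = {}"
    using \<open>n \<noteq> 0\<close> by simp
  ultimately have "\<not> ball p r \<inter> L \<subseteq> {y. n \<bullet> y = c}"
    using assms(1) interior_maximal[of "ball p r \<inter> L"] by blast
  then obtain y where y: "y \<in> ball p r" "y \<in> L" "n \<bullet> y \<noteq> c"
    by blast
  show thesis
  proof (cases "c < n \<bullet> y")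
    case True
    have "ball p r \<inter> {y. c < n \<bullet> y} \<subseteq> L"
      by (rule fill) (use True y in \<open>auto intro: convex_Int convex_halfspace_gt\<close>)
    then show thesis
      using that(1) True y by blast
  next
    case False
    then have "n \<bullet> y < c"
      using y(3) by linarith
    have "ball p r \<inter> {y. n \<bullet> y < c} \<subseteq> L"
      by (rule fill) (use \<open>n \<bullet> y < c\<close> y in \<open>auto intro: convex_Int convex_halfspace_lt\<close>)
    then show thesis
      using that(2) \<open>n \<bullet> y < c\<close> y by blast
  qed
qed

lemma closed_segment_in_frontier_of_three_disjoint_open:
  fixes a b :: "'a::euclidean_space"
  assumes "2 \<le> DIM('a)" "a \<noteq> b" "finite P"
    and "open L1" "open L2" "open L3"
    and "L1 \<inter> L2 = {}" "L1 \<inter> L3 = {}" "L2 \<inter> L3 = {}"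
    and frontier_segments: "\<And>L. L \<in> {L1, L2, L3} \<Longrightarrow>
      frontier L \<subseteq> (\<Union>e\<in>P. closed_segment (fst e) (snd e))"
    and common: "\<And>L. L \<in> {L1, L2, L3} \<Longrightarrow> closed_segment a b \<subseteq> frontier L"
  shows False
proof -
  obtain n :: 'a where "n \<noteq> 0" "orthogonal (b - a) n"
    using orthogonal_to_vector_exists[OF assms(1)] by blast
  then have "n \<bullet> b = n \<bullet> a"
    by (simp add: orthogonal_def inner_commute inner_diff_right)
  then have "closed_segment a b \<subseteq> {y. n \<bullet> y = n \<bullet> a}"
    by (intro closed_segment_subset convex_hyperplane) auto
  then obtain p r where p: "p \<in> closed_segment a b" "0 < r"
    and flat: "\<And>e y. e \<in> P \<Longrightarrow> y \<in> closed_segment (fst e) (snd e) \<Longrightarrow> y \<in> ball p r \<Longrightarrow>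
      n \<bullet> y = n \<bullet> a"
    using closed_segment_generic_point[OF assms(2,3)] by blast
  define upper where "upper = ball p r \<inter> {y. n \<bullet> a < n \<bullet> y}"
  define lower where "lower = ball p r \<inter> {y. n \<bullet> y < n \<bullet> a}"
  have half: "(upper \<subseteq> L \<and> upper \<noteq> {}) \<or> (lower \<subseteq> L \<and> lower \<noteq> {})"
    if L: "L \<in> {L1, L2, L3}" for L
    unfolding upper_def lower_def
  proof (rule open_contains_half_ball)
    show "open L"
      using L assms(4-6) by blast
    show "p \<in> closure L"
      using p(1) common[OF L] by (auto simp: frontier_def)
    show "ball p r \<inter> frontier L \<subseteq> {y. n \<bullet> y = n \<bullet> a}"
      using frontier_segments[OF L] flat by blast
  qed (use p(2) \<open>n \<noteq> 0\<close> in auto)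
  have disjoint: "X = {}" if "A \<inter> B = {}" "X \<subseteq> A" "X \<subseteq> B" for X A B :: "'a set"
    using that by blast
  show False
    using half[of L1] half[of L2] half[of L3]
      disjoint[OF assms(7)] disjoint[OF assms(8)] disjoint[OF assms(9)]
    by (meson insertI1 insertI2)
qed

lemma closure_Int_closure_subset_frontier:
  assumes "open K" "K \<inter> L = {}"
  shows "closure K \<inter> closure L \<subseteq> frontier K"
  using assms open_Int_closure_eq_empty[of K L] by (auto simp: frontier_def interior_open)

lemma admissible_meshD:
  assumes "admissible_mesh \<Omega> T E x"
  shows "finite T" "finite E" "bounded \<Omega>"
    and "K \<in> T \<Longrightarrow> open K" "K \<in> T \<Longrightarrow> K \<noteq> {}" "K \<in> T \<Longrightarrow> K \<subseteq> \<Omega>"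
    and "K \<in> T \<Longrightarrow> L \<in> T \<Longrightarrow> K \<noteq> L \<Longrightarrow> K \<inter> L = {}"
    and "\<sigma> \<in> E \<Longrightarrow> fst \<sigma> \<noteq> snd \<sigma>"
    and "K \<in> T \<Longrightarrow> frontier K = \<Union>(seg ` edges_of E K)"
  using assms unfolding admissible_mesh_def by simp_all

lemma measure_lebesgue_open_pos:
  fixes K :: "'a::euclidean_space set"
  assumes "open K" "bounded K" "K \<noteq> {}"
  shows "0 < measure lebesgue K"
proof -
  obtain z e where "0 < e" "ball z e \<subseteq> K"
    using assms(1,3) open_contains_ball by blast
  have "0 < measure lborel (ball z e)"
    using \<open>0 < e\<close> content_ball_pos by blast
  also have "\<dots> = measure lebesgue (ball z e)"
    by (simp add: measure_completion)
  also have "\<dots> \<le> measure lebesgue K"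
    using \<open>ball z e \<subseteq> K\<close> assms(1,2)
    by (intro measure_mono_fmeasurable) (auto simp: bounded_set_imp_lmeasurable borel_open)
  finally show ?thesis .
qed

lemma mK_pos:
  assumes "admissible_mesh \<Omega> T E x" "K \<in> T"
  shows "0 < mK K"
  unfolding mK_def
proof (rule measure_lebesgue_open_pos)
  show "bounded K"
    using admissible_meshD(3)[OF assms(1)] admissible_meshD(6)[OF assms] bounded_subset by blast
qed (use admissible_meshD(4,5)[OF assms] in auto)

lemma edge_in_frontier_of_at_most_two_cells:
  assumes mesh: "admissible_mesh \<Omega> T E x" and "\<sigma> \<in> E"
    and cells: "L1 \<in> T" "L2 \<in> T" "L3 \<in> T"
    and edge: "seg \<sigma> \<subseteq> frontier L1" "seg \<sigma> \<subseteq> frontier L2" "seg \<sigma> \<subseteq> frontier L3"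
  shows "L1 = L2 \<or> L1 = L3 \<or> L2 = L3"
proof (rule ccontr)
  assume "\<not> (L1 = L2 \<or> L1 = L3 \<or> L2 = L3)"
  have frontiers: "frontier L \<subseteq> (\<Union>e\<in>E. closed_segment (fst e) (snd e))"
    if "L \<in> {L1, L2, L3}" for L
  proof -
    have "frontier L = \<Union>(seg ` edges_of E L)"
      using admissible_meshD(9)[OF mesh] cells that by blast
    then show ?thesis
      by (auto simp: edges_of_def seg_def)
  qed
  have common: "closed_segment (fst \<sigma>) (snd \<sigma>) \<subseteq> frontier L" if "L \<in> {L1, L2, L3}" for L
    using edge that by (auto simp: seg_def)
  show False
    by (rule closed_segment_in_frontier_of_three_disjoint_open[OF _ _ _ _ _ _ _ _ _ frontiers common])
      (use admissible_meshD(2,4,7,8)[OF mesh] \<open>\<sigma> \<in> E\<close> cells \<open>\<not> (L1 = L2 \<or> L1 = L3 \<or> L2 = L3)\<close>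
        in auto)
qed

lemma nbr_in_mesh:
  assumes mesh: "admissible_mesh \<Omega> T E x" and "K \<in> T"
    and \<sigma>: "\<sigma> \<in> edges_of E K" "is_int_edge T \<sigma>"
  shows "nbr T E K \<sigma> \<in> T"
proof -
  have "\<sigma> \<in> E"
    using \<sigma>(1) by (simp add: edges_of_def)
  obtain K' L' where KL: "K' \<in> T" "L' \<in> T" "K' \<noteq> L'" "seg \<sigma> = closure K' \<inter> closure L'"
    using \<sigma>(2) unfolding is_int_edge_def by blast
  have "\<sigma> \<in> edges_of E K'" "\<sigma> \<in> edges_of E L'"
    using closure_Int_closure_subset_frontier[of K' L'] closure_Int_closure_subset_frontier[of L' K']
      admissible_meshD(4,7)[OF mesh] KL \<open>\<sigma> \<in> E\<close>
    by (auto simp: edges_of_def)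
  then have "\<exists>L. L \<in> T \<and> L \<noteq> K \<and> \<sigma> \<in> edges_of E L"
    using KL(1-3) by metis
  moreover have "L = L'" if "L \<in> T" "L \<noteq> K" "\<sigma> \<in> edges_of E L"
      "L' \<in> T" "L' \<noteq> K" "\<sigma> \<in> edges_of E L'" for L L'
    using edge_in_frontier_of_at_most_two_cells[OF mesh \<open>\<sigma> \<in> E\<close> \<open>K \<in> T\<close> that(1,4)] \<sigma>(1) that
    by (auto simp: edges_of_def)
  ultimately have "\<exists>!L. L \<in> T \<and> L \<noteq> K \<and> \<sigma> \<in> edges_of E L"
    \<comment> \<open>without uniqueness the description in \<open>nbr\<close> would denote an arbitrary set\<close>
    by blast
  from theI'[OF this] show ?thesis
    unfolding nbr_def by blast
qed

lemma tau_nonneg: "0 \<le> tau T E x K \<sigma>"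
  by (simp add: tau_def elen_def d_edge_def infdist_nonneg)

lemma flux_uminus: "flux T E x (\<lambda>L. - v L) (- vb) K = - flux T E x v vb K"
  unfolding flux_def Dks_def sum_negf[symmetric] by (intro sum.cong) (auto simp: algebra_simps)

lemma flux_nonneg_at_min:
  assumes mesh: "admissible_mesh \<Omega> T E x" and "K \<in> T"
    and min: "\<And>L. L \<in> T \<Longrightarrow> v K \<le> v L" and "v K \<le> vb"
  shows "0 \<le> flux T E x v vb K"
  unfolding flux_def
proof (rule sum_nonneg)
  fix \<sigma> assume "\<sigma> \<in> edges_of E K"
  then have "0 \<le> Dks T E v vb K \<sigma>"
    using min[OF nbr_in_mesh[OF mesh \<open>K \<in> T\<close>]] \<open>v K \<le> vb\<close> by (simp add: Dks_def)
  then show "0 \<le> tau T E x K \<sigma> * Dks T E v vb K \<sigma>"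
    by (simp add: tau_nonneg)
qed

lemma discrete_min_principle:
  assumes mesh: "admissible_mesh \<Omega> T E x" and "c \<le> vb"
    and no_undershoot: "\<And>K. K \<in> T \<Longrightarrow> v K < c \<Longrightarrow> 0 \<le> flux T E x v vb K \<Longrightarrow> False"
  shows "\<forall>K\<in>T. c \<le> v K"
proof (cases "T = {}")
  case False
  obtain K where "K \<in> T" and min: "\<And>L. L \<in> T \<Longrightarrow> v K \<le> v L"
    using arg_min_if_finite[OF admissible_meshD(1)[OF mesh] False, of v] by (metis not_less)
  show ?thesis
  proof (rule ccontr)
    assume "\<not> (\<forall>K\<in>T. c \<le> v K)"
    then have "v K < c"
      using min by force
    then show False
      using no_undershoot[OF \<open>K \<in> T\<close>] flux_nonneg_at_min[where v = v, OF mesh \<open>K \<in> T\<close> min] \<open>c \<le> vb\<close> by simp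
  qed
qed simp

lemma discrete_max_principle:
  assumes mesh: "admissible_mesh \<Omega> T E x" and "vb \<le> c"
    and no_overshoot: "\<And>K. K \<in> T \<Longrightarrow> c < v K \<Longrightarrow> flux T E x v vb K \<le> 0 \<Longrightarrow> False"
  shows "\<forall>K\<in>T. v K \<le> c"
proof -
  have "\<forall>K\<in>T. - c \<le> - v K"
  proof (rule discrete_min_principle[OF mesh])
    show "- c \<le> - vb"
      using \<open>vb \<le> c\<close> by simp
    fix K assume "K \<in> T" "- v K < - c" "0 \<le> flux T E x (\<lambda>L. - v L) (- vb) K"
    then show False
      using no_overshoot by (simp add: flux_uminus)
  qed
  then show ?thesis
    by simp
qed

lemma g_fun_pos_part_of_neg: "S < 0 \<Longrightarrow> g_fun \<kappa>1 \<kappa>4 (pos_part S) M = 0"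
  by (simp add: g_fun_def pos_part_def)

lemma g_fun_nonpos:
  assumes "0 \<le> \<kappa>1" "0 < \<kappa>4" "0 \<le> S" "0 \<le> M"
  shows "g_fun \<kappa>1 \<kappa>4 S M \<le> 0"
  using assms by (simp add: g_fun_def)

theorem lemma3p1:
  fixes \<Omega> :: "pt set" and T :: "cell set" and E :: "edge set" and x :: "cell \<Rightarrow> pt"
    and \<Delta>t \<epsilon> \<rho> MD d1 d2 \<kappa>1 \<kappa>2 \<kappa>3 \<kappa>4 a b :: real
    and Sold Mold S W M :: "cell \<Rightarrow> real"
  assumes mesh: "admissible_mesh \<Omega> T E x"
    and dt: "\<Delta>t > 0" and eps: "\<epsilon> > 0" and rho: "0 < \<rho>" "\<rho> \<le> 1"
    and MD: "0 < MD" "MD < 1" and d: "d1 > 0" "d2 > 0"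
    and kap: "\<kappa>1 \<ge> 0" "\<kappa>2 \<ge> 0" "\<kappa>3 \<ge> 0" "\<kappa>4 > 0"
    and ab: "a \<ge> 1" "b \<ge> 0"
    and old: "\<And>K. K \<in> T \<Longrightarrow> 0 \<le> Sold K \<and> Sold K \<le> 1 \<and> 0 \<le> Mold K \<and> Mold K < 1"
    and Mdef: "\<And>K. K \<in> T \<Longrightarrow> 0 < M K \<and> M K < 1 \<and>
                 W K = F_fun a b (M K) - F_fun a b MD + \<epsilon> * ln (M K / MD)"
    and eqS: "\<And>K. K \<in> T \<Longrightarrow>
        mK K / \<Delta>t * (S K - \<rho> * Sold K) - \<rho> * d1 * flux T E x S 1 K
          = \<rho> * mK K * g_fun \<kappa>1 \<kappa>4 (pos_part (S K)) (M K)"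
    and eqW: "\<And>K. K \<in> T \<Longrightarrow>
        \<epsilon> * (mK K * W K - flux T E x W 0 K)
          = - \<rho> * mK K / \<Delta>t * (M K - Mold K)
            + \<rho> * d2 * flux T E x (\<lambda>L. F_fun a b (M L)) (F_fun a b MD) K
            + \<rho> * mK K * h_fun \<kappa>2 \<kappa>3 \<kappa>4 (pos_part (S K)) (M K)"
  shows "\<forall>K\<in>T. 0 \<le> S K \<and> S K \<le> 1"
proof -
  \<comment> \<open>only the S-equation is used; of the W-equation and the definition of M only 0 < M K enters\<close>
  have scale_pos: "0 < mK K / \<Delta>t" if "K \<in> T" for K
    using mK_pos[OF mesh that] dt by simp
  have "\<forall>K\<in>T. 0 \<le> S K"
  proof (rule discrete_min_principle[OF mesh])
    fix K assume K: "K \<in> T" "S K < 0" "0 \<le> flux T E x S 1 K"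
    have "mK K / \<Delta>t * (S K - \<rho> * Sold K) = \<rho> * d1 * flux T E x S 1 K"
      using eqS[OF K(1)] by (simp add: g_fun_pos_part_of_neg[OF K(2)])
    also have "\<dots> \<ge> 0"
      using K(3) rho d by simp
    finally have "\<rho> * Sold K \<le> S K"
      using scale_pos[OF K(1)] mult_pos_neg[of "mK K / \<Delta>t" "S K - \<rho> * Sold K"] by linarith
    moreover have "0 \<le> \<rho> * Sold K"
      using old[OF K(1)] rho by simp
    ultimately show False
      using K(2) by linarith
  qed simp
  moreover have "\<forall>K\<in>T. S K \<le> 1"
  proof (rule discrete_max_principle[OF mesh])
    fix K assume K: "K \<in> T" "1 < S K" "flux T E x S 1 K \<le> 0"
    have "g_fun \<kappa>1 \<kappa>4 (pos_part (S K)) (M K) \<le> 0"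
      using g_fun_nonpos[of \<kappa>1 \<kappa>4 "S K" "M K"] kap K(2) Mdef[OF K(1)] by (simp add: pos_part_def)
    then have "\<rho> * mK K * g_fun \<kappa>1 \<kappa>4 (pos_part (S K)) (M K) \<le> 0"
      using rho mK_pos[OF mesh K(1)] by (simp add: mult_nonneg_nonpos)
    moreover have "\<rho> * d1 * flux T E x S 1 K \<le> 0"
      using K(3) rho d by (simp add: mult_nonneg_nonpos)
    ultimately have "mK K / \<Delta>t * (S K - \<rho> * Sold K) \<le> 0"
      using eqS[OF K(1)] by linarith
    then have "S K \<le> \<rho> * Sold K"
      using scale_pos[OF K(1)] mult_pos_pos[of "mK K / \<Delta>t" "S K - \<rho> * Sold K"] by linarith
    moreover have "\<rho> * Sold K \<le> 1"
      using old[OF K(1)] rho by (simp add: mult_le_one)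
    ultimately show False
      using K(2) by linarith
  qed simp
  ultimately show ?thesis
    by blast
qed

end
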